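(* Let $n\geq1$. The submonoid $\Sigma_n$ of $\mathcal{B}_{n+1}$ is an Ore monoid, and its group of fractions is isomorphic to $\mathcal{B}_{n+1}$ (via the map induced by the inclusion $\Sigma_n\subseteq\mathcal{B}_{n+1}$).
   Context: $\mathcal{B}_{n+1}$ is the braid group on $n+1$ strands with standard Artin generators $\sigma_1,\dots,\sigma_n$; $\Sigma_n$ is its submonoid generated by $\sigma_1,\ \sigma_1\sigma_2,\ \dots,\ \sigma_1\sigma_2\cdots\sigma_n$. An Ore monoid is a monoid that is left- and right-cancellative and in which any two elements admit a common left-multiple (an element $a'a=b'b$). *)

theory Defs
  imports "HOL-Algebra.Algebra"
begin

text \<open>A letter (i, True) stands for sigma_i, (i, False) for sigma_i inverse,
  with 1 <= i < m.\<close>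

definition braid_letters :: "nat \<Rightarrow> (nat \<times> bool) set" where
  "braid_letters m = {(i, b). 1 \<le> i \<and> i < m}"

definition braid_words :: "nat \<Rightarrow> (nat \<times> bool) list set" where
  "braid_words m = {w. set w \<subseteq> braid_letters m}"

inductive braid_eqv :: "nat \<Rightarrow> (nat \<times> bool) list \<Rightarrow> (nat \<times> bool) list \<Rightarrow> bool"
  for m :: nat where
  refl: "w \<in> braid_words m \<Longrightarrow> braid_eqv m w w"
| sym: "braid_eqv m u v \<Longrightarrow> braid_eqv m v u"
| trans: "braid_eqv m u v \<Longrightarrow> braid_eqv m v w \<Longrightarrow> braid_eqv m u w"
| cong: "braid_eqv m u u' \<Longrightarrow> braid_eqv m v v' \<Longrightarrow> braid_eqv m (u @ v) (u' @ v')"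
| cancel: "1 \<le> i \<Longrightarrow> i < m \<Longrightarrow> braid_eqv m [(i, b), (i, \<not> b)] []"
| far_comm: "1 \<le> i \<Longrightarrow> i + 2 \<le> j \<Longrightarrow> j < m \<Longrightarrow>
      braid_eqv m [(i, True), (j, True)] [(j, True), (i, True)]"
| braid_rel: "1 \<le> i \<Longrightarrow> i + 1 < m \<Longrightarrow>
      braid_eqv m [(i, True), (Suc i, True), (i, True)] [(Suc i, True), (i, True), (Suc i, True)]"

definition braid_class :: "nat \<Rightarrow> (nat \<times> bool) list \<Rightarrow> (nat \<times> bool) list set" where
  "braid_class m w = {v. braid_eqv m w v}"

definition braid_mult :: "nat \<Rightarrow> (nat \<times> bool) list set \<Rightarrow> (nat \<times> bool) list set \<Rightarrow> (nat \<times> bool) list set" where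
  "braid_mult m A B = {w. \<exists>u\<in>A. \<exists>v\<in>B. braid_eqv m (u @ v) w}"

definition braid_group :: "nat \<Rightarrow> (nat \<times> bool) list set monoid" where
  "braid_group m =
     \<lparr> carrier = braid_class m ` braid_words m,
       monoid.mult = braid_mult m,
       one = braid_class m [] \<rparr>"

definition braid_sigma :: "nat \<Rightarrow> nat \<Rightarrow> (nat \<times> bool) list set" where
  "braid_sigma m i = braid_class m [(i, True)]"

definition braid_delta :: "nat \<Rightarrow> nat \<Rightarrow> (nat \<times> bool) list set" where
  "braid_delta m k = braid_class m (map (\<lambda>i. (i, True)) [1..<Suc k])"

definition submonoid_generated :: "('a, 'b) monoid_scheme \<Rightarrow> 'a set \<Rightarrow> 'a set" where
  "submonoid_generated G S = \<Inter> {M. submonoid M G \<and> S \<subseteq> M}"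

definition Sigma_monoid :: "nat \<Rightarrow> (nat \<times> bool) list set monoid" where
  "Sigma_monoid n = (braid_group (Suc n))
     \<lparr> carrier := submonoid_generated (braid_group (Suc n)) (braid_delta (Suc n) ` {1..n}) \<rparr>"

definition ore_monoid :: "('a, 'b) monoid_scheme \<Rightarrow> bool" where
  "ore_monoid M \<longleftrightarrow> monoid M
     \<and> (\<forall>a\<in>carrier M. \<forall>b\<in>carrier M. \<forall>c\<in>carrier M. a \<otimes>\<^bsub>M\<^esub> b = a \<otimes>\<^bsub>M\<^esub> c \<longrightarrow> b = c)
     \<and> (\<forall>a\<in>carrier M. \<forall>b\<in>carrier M. \<forall>c\<in>carrier M. b \<otimes>\<^bsub>M\<^esub> a = c \<otimes>\<^bsub>M\<^esub> a \<longrightarrow> b = c)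
     \<and> (\<forall>a\<in>carrier M. \<forall>b\<in>carrier M. \<exists>a'\<in>carrier M. \<exists>b'\<in>carrier M.
          a' \<otimes>\<^bsub>M\<^esub> a = b' \<otimes>\<^bsub>M\<^esub> b)"

text \<open>For an Ore monoid M: G is (isomorphic, via the map induced by f, to) the group of
  fractions of M, i.e. f is an injective monoid homomorphism into the group G and every
  element of G has the form f(a)^-1 f(b) with a, b in M.\<close>
definition group_of_fractions_via ::
    "('a, 'c) monoid_scheme \<Rightarrow> ('b, 'd) monoid_scheme \<Rightarrow> ('a \<Rightarrow> 'b) \<Rightarrow> bool" where
  "group_of_fractions_via M G f \<longleftrightarrow> monoid M \<and> group G
     \<and> f \<in> hom M G \<and> f \<one>\<^bsub>M\<^esub> = \<one>\<^bsub>G\<^esub> \<and> inj_on f (carrier M)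
     \<and> (\<forall>g\<in>carrier G. \<exists>a\<in>carrier M. \<exists>b\<in>carrier M.
          g = inv\<^bsub>G\<^esub> (f a) \<otimes>\<^bsub>G\<^esub> f b)"

end

theory Submission
  imports Defs
begin

text \<open>Write \<open>\<delta>\<^sub>k = \<sigma>\<^sub>1\<cdots>\<sigma>\<^sub>k\<close> and \<open>\<Delta> = \<delta>\<^sub>n\<close>. From the braid relations one gets
  \<open>\<delta>\<^sub>k \<sigma>\<^sub>i = \<sigma>\<^sub>i\<^sub>+\<^sub>1 \<delta>\<^sub>k\<close> for \<open>i < k\<close>, and hence that \<open>z = \<Delta>\<^sup>n\<^sup>+\<^sup>1\<close> (the full twist) is central.
  Every generator \<open>\<delta>\<^sub>k\<close> of \<open>\<Sigma>\<^sub>n\<close> has a left multiple in \<open>\<Sigma>\<^sub>n\<close> that is a power of \<open>z\<close>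
  (by downward induction on \<open>k\<close>, starting from \<open>\<Delta>\<^sup>n \<cdot> \<delta>\<^sub>n = z\<close>), and elements with this
  property form a submonoid, so every element of \<open>\<Sigma>\<^sub>n\<close> has one. Since \<open>z \<in> \<Sigma>\<^sub>n\<close> is central,
  two elements \<open>a, b\<close> with \<open>c a = z\<^sup>j\<close>, \<open>d b = z\<^sup>l\<close> have the common left multiple \<open>z\<^sup>j\<^sup>+\<^sup>l\<close>.
  Cancellativity is inherited from the braid group. By the Ore condition the left
  fractions \<open>a\<inverse> b\<close> are closed under products, and they contain the generators because
  \<open>\<sigma>\<^sub>i = \<delta>\<^sub>i\<^sub>-\<^sub>1\<inverse> \<delta>\<^sub>i\<close>; so they exhaust the braid group.\<close>

lemma submonoid_submonoid_generated:
  assumes "monoid G" "S \<subseteq> carrier G"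
  shows "submonoid (submonoid_generated G S) G"
proof -
  have "submonoid (carrier G) G"
    using assms(1) by (simp add: submonoid_def monoid.m_closed)
  then show ?thesis
    using assms(2) unfolding submonoid_generated_def submonoid_def by auto
qed

lemma generator_in_submonoid_generated: "x \<in> S \<Longrightarrow> x \<in> submonoid_generated G S"
  unfolding submonoid_generated_def by auto

lemma submonoid_generated_minimal:
  "submonoid M G \<Longrightarrow> S \<subseteq> M \<Longrightarrow> submonoid_generated G S \<subseteq> M"
  unfolding submonoid_generated_def by auto

definition common_left_multiples :: "('a, 'b) monoid_scheme \<Rightarrow> 'a set \<Rightarrow> bool" where
  "common_left_multiples G M \<longleftrightarrow>
     (\<forall>a\<in>M. \<forall>b\<in>M. \<exists>a'\<in>M. \<exists>b'\<in>M. a' \<otimes>\<^bsub>G\<^esub> a = b' \<otimes>\<^bsub>G\<^esub> b)"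

definition left_fractions :: "('a, 'b) monoid_scheme \<Rightarrow> 'a set \<Rightarrow> 'a set" where
  "left_fractions G M = {inv\<^bsub>G\<^esub> a \<otimes>\<^bsub>G\<^esub> b | a b. a \<in> M \<and> b \<in> M}"

definition right_divisors_of_powers :: "('a, 'b) monoid_scheme \<Rightarrow> 'a set \<Rightarrow> 'a \<Rightarrow> 'a set" where
  "right_divisors_of_powers G M z = {x \<in> M. \<exists>c\<in>M. \<exists>j::nat. c \<otimes>\<^bsub>G\<^esub> x = z [^]\<^bsub>G\<^esub> j}"

lemma (in monoid) submonoid_nat_pow_closed:
  "submonoid M G \<Longrightarrow> x \<in> M \<Longrightarrow> x [^] (j::nat) \<in> M"
  by (induction j) (auto dest: submonoid.one_closed submonoid.m_closed)

context group
begin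

lemma one_in_left_fractions: "submonoid M G \<Longrightarrow> \<one> \<in> left_fractions G M"
  unfolding left_fractions_def
  by (auto intro!: exI[of _ \<one>] dest: submonoid.one_closed)

lemma left_fractions_mult_closed:
  assumes M: "submonoid M G" and ore: "common_left_multiples G M"
    and x: "x \<in> left_fractions G M" and y: "y \<in> left_fractions G M"
  shows "x \<otimes> y \<in> left_fractions G M"
proof -
  obtain a b where ab: "a \<in> M" "b \<in> M" "x = inv a \<otimes> b"
    using x by (auto simp: left_fractions_def)
  obtain c f where cf: "c \<in> M" "f \<in> M" "y = inv c \<otimes> f"
    using y by (auto simp: left_fractions_def)
  obtain u v where uv: "u \<in> M" "v \<in> M" "u \<otimes> b = v \<otimes> c"
    using ore ab(2) cf(1) unfolding common_left_multiples_def by blast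
  have carr: "a \<in> carrier G" "b \<in> carrier G" "c \<in> carrier G" "f \<in> carrier G"
    "u \<in> carrier G" "v \<in> carrier G"
    using ab cf uv submonoid.subset[OF M] by auto
  have "b \<otimes> inv c = inv u \<otimes> v"
    using carr uv(3) by (metis inv_solve_left' inv_solve_right m_assoc m_closed inv_closed)
  have "x \<otimes> y = inv a \<otimes> (b \<otimes> inv c) \<otimes> f"
    using carr ab(3) cf(3) by (simp add: m_assoc)
  also have "\<dots> = inv (u \<otimes> a) \<otimes> (v \<otimes> f)"
    using carr \<open>b \<otimes> inv c = inv u \<otimes> v\<close> by (simp add: m_assoc inv_mult_group)
  finally have "x \<otimes> y = inv (u \<otimes> a) \<otimes> (v \<otimes> f)" .
  moreover have "u \<otimes> a \<in> M" "v \<otimes> f \<in> M"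
    using ab cf uv submonoid.m_closed[OF M] by auto
  ultimately show ?thesis
    unfolding left_fractions_def by blast
qed

lemma ore_monoid_submonoid:
  assumes M: "submonoid M G" and ore: "common_left_multiples G M"
  shows "ore_monoid (G\<lparr>carrier := M\<rparr>)"
  using submonoid.submonoid_is_monoid[OF M is_monoid] ore submonoid.subset[OF M]
  unfolding ore_monoid_def common_left_multiples_def by (auto dest: l_cancel r_cancel)

lemma group_of_fractions_via_submonoid:
  assumes M: "submonoid M G" and fractions: "carrier G \<subseteq> left_fractions G M"
  shows "group_of_fractions_via (G\<lparr>carrier := M\<rparr>) G id"
  using submonoid.submonoid_is_monoid[OF M is_monoid] submonoid.subset[OF M] fractions
  unfolding group_of_fractions_via_def left_fractions_def
  by (auto simp: hom_def is_group) blast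

lemma commute_mult:
  "\<lbrakk>z \<in> carrier G; a \<in> carrier G; b \<in> carrier G; z \<otimes> a = a \<otimes> z; z \<otimes> b = b \<otimes> z\<rbrakk>
    \<Longrightarrow> z \<otimes> (a \<otimes> b) = (a \<otimes> b) \<otimes> z"
  by (metis m_assoc)

lemma commute_inv:
  "\<lbrakk>z \<in> carrier G; a \<in> carrier G; z \<otimes> a = a \<otimes> z\<rbrakk> \<Longrightarrow> z \<otimes> inv a = inv a \<otimes> z"
  by (metis inv_closed inv_solve_left' inv_solve_right m_assoc m_closed)

lemma central_nat_pow:
  assumes "z \<in> carrier G" "\<And>x. x \<in> carrier G \<Longrightarrow> z \<otimes> x = x \<otimes> z" "x \<in> carrier G"
  shows "z [^] (j::nat) \<otimes> x = x \<otimes> z [^] j"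
proof (induction j)
  case (Suc j)
  then show ?case
    using assms by (simp add: m_assoc) (metis m_assoc nat_pow_closed)
qed (use assms in simp)

lemma submonoid_right_divisors_of_powers:
  assumes M: "submonoid M G" and z: "z \<in> carrier G"
    and central: "\<And>x. x \<in> carrier G \<Longrightarrow> z \<otimes> x = x \<otimes> z"
  shows "submonoid (right_divisors_of_powers G M z) G"
proof
  fix x y
  assume "x \<in> right_divisors_of_powers G M z" "y \<in> right_divisors_of_powers G M z"
  then obtain c d and j l :: nat where
    h: "x \<in> M" "y \<in> M" "c \<in> M" "d \<in> M" "c \<otimes> x = z [^] j" "d \<otimes> y = z [^] l"
    unfolding right_divisors_of_powers_def by blast
  have carr: "x \<in> carrier G" "y \<in> carrier G" "c \<in> carrier G" "d \<in> carrier G"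
    using h submonoid.subset[OF M] by auto
  have "(d \<otimes> c) \<otimes> (x \<otimes> y) = d \<otimes> (c \<otimes> x) \<otimes> y"
    using carr by (simp add: m_assoc)
  also have "\<dots> = d \<otimes> z [^] j \<otimes> y"
    using h(5) by simp
  also have "\<dots> = z [^] j \<otimes> (d \<otimes> y)"
    using carr z central_nat_pow[OF z central, of d j] by (metis m_assoc nat_pow_closed)
  also have "\<dots> = z [^] (j + l)"
    using h(6) z by (simp add: nat_pow_mult)
  finally show "x \<otimes> y \<in> right_divisors_of_powers G M z"
    unfolding right_divisors_of_powers_def using h submonoid.m_closed[OF M] by blast
next
  show "\<one> \<in> right_divisors_of_powers G M z"
    unfolding right_divisors_of_powers_def using submonoid.one_closed[OF M]
    by (auto intro!: bexI[of _ \<one>] exI[of _ 0])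
qed (use submonoid.subset[OF M] in \<open>auto simp: right_divisors_of_powers_def\<close>)

lemma common_left_multiples_central_powers:
  assumes M: "submonoid M G" and z: "z \<in> M"
    and central: "\<And>x. x \<in> carrier G \<Longrightarrow> z \<otimes> x = x \<otimes> z"
    and divisors: "M \<subseteq> right_divisors_of_powers G M z"
  shows "common_left_multiples G M"
  unfolding common_left_multiples_def
proof (intro ballI)
  fix a b assume ab: "a \<in> M" "b \<in> M"
  obtain c and j :: nat where c: "c \<in> M" "c \<otimes> a = z [^] j"
    using divisors ab unfolding right_divisors_of_powers_def by blast
  obtain d and l :: nat where d: "d \<in> M" "d \<otimes> b = z [^] l"
    using divisors ab unfolding right_divisors_of_powers_def by blast
  have carr: "a \<in> carrier G" "b \<in> carrier G" "c \<in> carrier G" "d \<in> carrier G" "z \<in> carrier G"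
    using ab c d z submonoid.subset[OF M] by auto
  have "(z [^] l \<otimes> c) \<otimes> a = z [^] (l + j)" "(z [^] j \<otimes> d) \<otimes> b = z [^] (j + l)"
    using c d carr by (simp_all add: m_assoc nat_pow_mult)
  then show "\<exists>a'\<in>M. \<exists>b'\<in>M. a' \<otimes> a = b' \<otimes> b"
    using submonoid_nat_pow_closed[OF M z] c d submonoid.m_closed[OF M] by (metis add.commute)
qed

end

lemma braid_class_eq: "braid_eqv m u v \<Longrightarrow> braid_class m u = braid_class m v"
  unfolding braid_class_def using braid_eqv.trans braid_eqv.sym by blast

lemma self_in_braid_class: "w \<in> braid_words m \<Longrightarrow> w \<in> braid_class m w"
  by (simp add: braid_class_def braid_eqv.refl)

lemma braid_mult_class:
  assumes "u \<in> braid_words m" "v \<in> braid_words m"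
  shows "braid_mult m (braid_class m u) (braid_class m v) = braid_class m (u @ v)"
proof
  show "braid_mult m (braid_class m u) (braid_class m v) \<subseteq> braid_class m (u @ v)"
    unfolding braid_mult_def braid_class_def
    using braid_eqv.cong braid_eqv.trans by blast
  show "braid_class m (u @ v) \<subseteq> braid_mult m (braid_class m u) (braid_class m v)"
    unfolding braid_mult_def using self_in_braid_class[OF assms(1)] self_in_braid_class[OF assms(2)]
    by (auto simp: braid_class_def)
qed

lemma braid_words_append [simp]:
  "u @ v \<in> braid_words m \<longleftrightarrow> u \<in> braid_words m \<and> v \<in> braid_words m"
  by (auto simp: braid_words_def)

definition braid_word_inv :: "(nat \<times> bool) list \<Rightarrow> (nat \<times> bool) list" where
  "braid_word_inv w = rev (map (\<lambda>(i, b). (i, \<not> b)) w)"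

lemma braid_word_inv_in_words: "w \<in> braid_words m \<Longrightarrow> braid_word_inv w \<in> braid_words m"
  by (auto simp: braid_word_inv_def braid_words_def braid_letters_def)

lemma braid_word_inv_inv [simp]: "braid_word_inv (braid_word_inv w) = w"
  by (induction w) (auto simp: braid_word_inv_def)

lemma braid_eqv_append_inv: "w \<in> braid_words m \<Longrightarrow> braid_eqv m (w @ braid_word_inv w) []"
proof (induction w)
  case Nil
  then show ?case by (simp add: braid_eqv.refl braid_words_def braid_word_inv_def)
next
  case (Cons x w)
  obtain i b where x: "x = (i, b)" by (cases x)
  have words: "[x] \<in> braid_words m" "w \<in> braid_words m" "[(i, \<not> b)] \<in> braid_words m"
    and i: "1 \<le> i" "i < m"
    using Cons.prems x by (auto simp: braid_words_def braid_letters_def)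
  have "braid_eqv m ([x] @ ((w @ braid_word_inv w) @ [(i, \<not> b)])) ([x] @ ([] @ [(i, \<not> b)]))"
    using Cons.IH words by (intro braid_eqv.cong braid_eqv.refl)
  moreover have "braid_eqv m ([x] @ ([] @ [(i, \<not> b)])) []"
    using braid_eqv.cancel[OF i, of b] by (simp add: x)
  ultimately show ?case
    using braid_eqv.trans by (fastforce simp: braid_word_inv_def x)
qed

lemma group_braid_group: "group (braid_group m)"
proof (rule groupI)
  fix x
  assume "x \<in> carrier (braid_group m)"
  then obtain w where w: "w \<in> braid_words m" "x = braid_class m w"
    by (auto simp: braid_group_def)
  have "braid_eqv m (braid_word_inv w @ w) []"
    using braid_eqv_append_inv[OF braid_word_inv_in_words[OF w(1)]] by simp
  then show "\<exists>y\<in>carrier (braid_group m). y \<otimes>\<^bsub>braid_group m\<^esub> x = \<one>\<^bsub>braid_group m\<^esub>"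
    using w braid_word_inv_in_words[OF w(1)]
    by (auto simp: braid_group_def braid_mult_class
        intro!: bexI[of _ "braid_class m (braid_word_inv w)"] braid_class_eq)
qed (auto simp: braid_group_def braid_mult_class braid_words_def)

locale braids = group G for G :: "(nat \<times> bool) list set monoid" (structure) +
  fixes n :: nat
  assumes G_def: "G = braid_group (Suc n)"
    and n_pos: "1 \<le> n"
begin

abbreviation \<sigma> :: "nat \<Rightarrow> (nat \<times> bool) list set" where
  "\<sigma> i \<equiv> braid_sigma (Suc n) i"

abbreviation \<delta> :: "nat \<Rightarrow> (nat \<times> bool) list set" where
  "\<delta> k \<equiv> braid_delta (Suc n) k"

lemma carrier_G: "carrier G = braid_class (Suc n) ` braid_words (Suc n)"
  by (simp add: G_def braid_group_def)

lemma one_G: "\<one> = braid_class (Suc n) []"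
  by (simp add: G_def braid_group_def)

lemma braid_class_closed: "w \<in> braid_words (Suc n) \<Longrightarrow> braid_class (Suc n) w \<in> carrier G"
  by (simp add: carrier_G)

lemma braid_class_append:
  "u \<in> braid_words (Suc n) \<Longrightarrow> v \<in> braid_words (Suc n) \<Longrightarrow>
    braid_class (Suc n) (u @ v) = braid_class (Suc n) u \<otimes> braid_class (Suc n) v"
  by (simp add: G_def braid_group_def braid_mult_class)

lemma letter_in_words: "1 \<le> i \<Longrightarrow> i \<le> n \<Longrightarrow> [(i, b)] \<in> braid_words (Suc n)"
  by (auto simp: braid_words_def braid_letters_def)

lemma sigma_closed [simp]: "1 \<le> i \<Longrightarrow> i \<le> n \<Longrightarrow> \<sigma> i \<in> carrier G"
  by (simp add: braid_sigma_def braid_class_closed letter_in_words)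

lemma braid_class_inverse_letter:
  assumes "1 \<le> i" "i \<le> n"
  shows "braid_class (Suc n) [(i, False)] = inv (\<sigma> i)"
proof (rule inv_equality[symmetric])
  show "braid_class (Suc n) [(i, False)] \<otimes> \<sigma> i = \<one>"
    using braid_class_append[OF letter_in_words[OF assms] letter_in_words[OF assms]]
      braid_class_eq[OF braid_eqv.cancel[of i "Suc n" False]] assms
    by (simp add: braid_sigma_def one_G)
qed (use assms in \<open>simp_all add: braid_class_closed letter_in_words\<close>)

lemma braid_class_induct [consumes 1, case_names one sigma sigma_inv]:
  assumes w: "w \<in> braid_words (Suc n)"
    and one: "P \<one>"
    and sigma: "\<And>i x. 1 \<le> i \<Longrightarrow> i \<le> n \<Longrightarrow> x \<in> carrier G \<Longrightarrow> P x \<Longrightarrow> P (\<sigma> i \<otimes> x)"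
    and sigma_inv: "\<And>i x. 1 \<le> i \<Longrightarrow> i \<le> n \<Longrightarrow> x \<in> carrier G \<Longrightarrow> P x \<Longrightarrow> P (inv (\<sigma> i) \<otimes> x)"
  shows "P (braid_class (Suc n) w)"
  using w
proof (induction w)
  case Nil
  then show ?case using one by (simp add: one_G)
next
  case (Cons x w)
  obtain i b where x: "x = (i, b)" by (cases x)
  have i: "1 \<le> i" "i \<le> n" and w: "w \<in> braid_words (Suc n)"
    using Cons.prems x by (auto simp: braid_words_def braid_letters_def)
  have split: "braid_class (Suc n) (x # w) = braid_class (Suc n) [(i, b)] \<otimes> braid_class (Suc n) w"
    using braid_class_append[OF letter_in_words[OF i] w] x by simp
  show ?case
    using split sigma[OF i] sigma_inv[OF i] Cons.IH[OF w] braid_class_closed[OF w]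
      braid_class_inverse_letter[OF i]
    by (cases b) (simp_all add: braid_sigma_def)
qed

lemma sigma_far_commute:
  assumes "1 \<le> i" "i + 2 \<le> j" "j \<le> n"
  shows "\<sigma> i \<otimes> \<sigma> j = \<sigma> j \<otimes> \<sigma> i"
  using braid_class_append[OF letter_in_words letter_in_words, of i j True True]
    braid_class_append[OF letter_in_words letter_in_words, of j i True True]
    braid_class_eq[OF braid_eqv.far_comm[of i j "Suc n"]] assms
  by (simp add: braid_sigma_def)

lemma sigma_braid_relation:
  assumes "1 \<le> i" "i + 1 \<le> n"
  shows "\<sigma> i \<otimes> \<sigma> (Suc i) \<otimes> \<sigma> i = \<sigma> (Suc i) \<otimes> \<sigma> i \<otimes> \<sigma> (Suc i)"
proof -
  have words: "[(i, True)] \<in> braid_words (Suc n)" "[(Suc i, True)] \<in> braid_words (Suc n)"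
    using assms letter_in_words by auto
  have "braid_class (Suc n) ([(i, True)] @ [(Suc i, True)] @ [(i, True)])
      = braid_class (Suc n) ([(Suc i, True)] @ [(i, True)] @ [(Suc i, True)])"
    using braid_class_eq[OF braid_eqv.braid_rel[of i "Suc n"]] assms by simp
  then show ?thesis
    using words
    by (simp only: braid_class_append braid_words_append m_assoc braid_class_closed
        braid_sigma_def simp_thms)
qed

lemma delta_0: "\<delta> 0 = \<one>"
  by (simp add: braid_delta_def one_G)

lemma delta_Suc: "Suc k \<le> n \<Longrightarrow> \<delta> (Suc k) = \<delta> k \<otimes> \<sigma> (Suc k)"
proof -
  assume k: "Suc k \<le> n"
  have "map (\<lambda>i. (i, True)) [1..<Suc k] \<in> braid_words (Suc n)"
    using k by (auto simp: braid_words_def braid_letters_def)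
  then show ?thesis
    unfolding braid_delta_def braid_sigma_def
    using braid_class_append[OF _ letter_in_words[of "Suc k" True]] k by simp
qed

lemma delta_closed [simp]: "k \<le> n \<Longrightarrow> \<delta> k \<in> carrier G"
  by (induction k) (auto simp: delta_0 delta_Suc)

primrec shifted_delta :: "nat \<Rightarrow> (nat \<times> bool) list set" where
  "shifted_delta 0 = \<one>"
| "shifted_delta (Suc k) = shifted_delta k \<otimes> \<sigma> (k + 2)"

lemma shifted_delta_closed [simp]: "k < n \<Longrightarrow> shifted_delta k \<in> carrier G"
  by (induction k) auto

lemma sigma_delta_commute: "j \<le> n \<Longrightarrow> k + 2 \<le> j \<Longrightarrow> \<sigma> j \<otimes> \<delta> k = \<delta> k \<otimes> \<sigma> j"
proof (induction k)
  case (Suc k)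
  have "\<sigma> j \<otimes> \<delta> (Suc k) = (\<sigma> j \<otimes> \<delta> k) \<otimes> \<sigma> (Suc k)"
    using Suc.prems by (simp add: delta_Suc m_assoc)
  also have "\<dots> = \<delta> k \<otimes> (\<sigma> (Suc k) \<otimes> \<sigma> j)"
    using Suc sigma_far_commute[of "Suc k" j] by (simp add: m_assoc)
  also have "\<dots> = \<delta> (Suc k) \<otimes> \<sigma> j"
    using Suc.prems by (simp add: delta_Suc m_assoc)
  finally show ?case .
qed (simp add: delta_0)

lemma delta_sigma_shift: "1 \<le> i \<Longrightarrow> i < k \<Longrightarrow> k \<le> n \<Longrightarrow> \<delta> k \<otimes> \<sigma> i = \<sigma> (Suc i) \<otimes> \<delta> k"
proof (induction k)
  case (Suc k)
  show ?case
  proof (cases "k = i")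
    case True
    obtain p where p: "i = Suc p" using Suc.prems by (cases i) auto
    have "\<delta> (Suc k) \<otimes> \<sigma> i = \<delta> p \<otimes> (\<sigma> i \<otimes> \<sigma> (Suc i) \<otimes> \<sigma> i)"
      using Suc.prems True p by (simp add: delta_Suc m_assoc)
    also have "\<dots> = (\<delta> p \<otimes> \<sigma> (Suc i)) \<otimes> (\<sigma> i \<otimes> \<sigma> (Suc i))"
      using sigma_braid_relation[of i] Suc.prems True p by (simp add: m_assoc)
    also have "\<dots> = (\<sigma> (Suc i) \<otimes> \<delta> p) \<otimes> (\<sigma> i \<otimes> \<sigma> (Suc i))"
      using sigma_delta_commute[of "Suc i" p] Suc.prems True p by simp
    also have "\<dots> = \<sigma> (Suc i) \<otimes> \<delta> (Suc k)"
      using Suc.prems True p by (simp add: delta_Suc m_assoc)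
    finally show ?thesis .
  next
    case False
    then have "i < k" using Suc.prems by simp
    have "\<delta> (Suc k) \<otimes> \<sigma> i = (\<delta> k \<otimes> \<sigma> i) \<otimes> \<sigma> (Suc k)"
      using Suc.prems sigma_far_commute[of i "Suc k"] \<open>i < k\<close> by (simp add: delta_Suc m_assoc)
    also have "\<dots> = \<sigma> (Suc i) \<otimes> \<delta> (Suc k)"
      using Suc.IH Suc.prems \<open>i < k\<close> by (simp add: delta_Suc m_assoc)
    finally show ?thesis .
  qed
qed simp

abbreviation \<Delta> :: "(nat \<times> bool) list set" where
  "\<Delta> \<equiv> \<delta> n"

lemma Delta_delta: "k < n \<Longrightarrow> \<Delta> \<otimes> \<delta> k = shifted_delta k \<otimes> \<Delta>"
proof (induction k)
  case (Suc k)
  have "\<Delta> \<otimes> \<delta> (Suc k) = (\<Delta> \<otimes> \<delta> k) \<otimes> \<sigma> (Suc k)"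
    using Suc.prems by (simp add: delta_Suc m_assoc)
  also have "\<dots> = shifted_delta k \<otimes> (\<Delta> \<otimes> \<sigma> (Suc k))"
    using Suc by (simp add: m_assoc)
  also have "\<dots> = shifted_delta (Suc k) \<otimes> \<Delta>"
    using delta_sigma_shift[of "Suc k" n] Suc.prems by (simp add: m_assoc)
  finally show ?case .
qed (simp add: delta_0)

lemma sigma_1_shifted_delta: "k < n \<Longrightarrow> \<sigma> 1 \<otimes> shifted_delta k = \<delta> (Suc k)"
proof (induction k)
  case (Suc k)
  then show ?case
    using n_pos by (simp add: m_assoc[symmetric] delta_Suc)
qed (use n_pos in \<open>simp add: delta_Suc delta_0\<close>)

lemma sigma_1_Delta_square: "\<sigma> 1 \<otimes> (\<Delta> \<otimes> \<Delta>) = \<Delta> \<otimes> \<Delta> \<otimes> \<sigma> n"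
proof -
  obtain p where p: "Suc p = n" using n_pos by (cases n) auto
  have "\<Delta> = \<delta> p \<otimes> \<sigma> n"
    using delta_Suc[of p] p by simp
  then have "\<Delta> \<otimes> \<Delta> = \<Delta> \<otimes> \<delta> p \<otimes> \<sigma> n"
    using p n_pos by (simp add: m_assoc)
  also have "\<dots> = shifted_delta p \<otimes> \<Delta> \<otimes> \<sigma> n"
    using Delta_delta[of p] p by simp
  finally have "\<sigma> 1 \<otimes> (\<Delta> \<otimes> \<Delta>) = (\<sigma> 1 \<otimes> shifted_delta p) \<otimes> \<Delta> \<otimes> \<sigma> n"
    using p n_pos by (simp add: m_assoc)
  also have "\<dots> = \<Delta> \<otimes> \<Delta> \<otimes> \<sigma> n"
    using sigma_1_shifted_delta[of p] delta_Suc[of p] p by (simp add: m_assoc)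
  finally show ?thesis .
qed

lemma Delta_pow_sigma_shift:
  "1 \<le> i \<Longrightarrow> i + j \<le> n \<Longrightarrow> \<Delta> [^] j \<otimes> \<sigma> i = \<sigma> (i + j) \<otimes> \<Delta> [^] j"
proof (induction j arbitrary: i)
  case (Suc j)
  have "\<Delta> [^] Suc j \<otimes> \<sigma> i = (\<Delta> [^] j \<otimes> \<sigma> (Suc i)) \<otimes> \<Delta>"
    using delta_sigma_shift[of i n] Suc.prems by (simp add: m_assoc)
  also have "\<dots> = \<sigma> (i + Suc j) \<otimes> \<Delta> [^] Suc j"
    using Suc.IH[of "Suc i"] Suc.prems by (simp add: m_assoc)
  finally show ?case .
qed simp

definition full_twist :: "(nat \<times> bool) list set" where
  "full_twist = \<Delta> [^] Suc n"

lemma full_twist_closed [simp]: "full_twist \<in> carrier G"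
  by (simp add: full_twist_def)

lemma full_twist_sigma_commute:
  assumes "1 \<le> i" "i \<le> n"
  shows "full_twist \<otimes> \<sigma> i = \<sigma> i \<otimes> full_twist"
proof -
  have split: "full_twist = \<Delta> [^] (i - 1) \<otimes> (\<Delta> \<otimes> \<Delta>) \<otimes> \<Delta> [^] (n - i)"
  proof -
    have "Suc n = (i - 1) + 2 + (n - i)" using assms by simp
    then have "full_twist = \<Delta> [^] ((i - 1) + 2) \<otimes> \<Delta> [^] (n - i)"
      unfolding full_twist_def by (metis delta_closed order_refl nat_pow_mult)
    also have "\<Delta> [^] ((i - 1) + 2) = \<Delta> [^] (i - 1) \<otimes> (\<Delta> \<otimes> \<Delta>)"
      by (simp add: m_assoc)
    finally show ?thesis .
  qed
  have "full_twist \<otimes> \<sigma> i = \<Delta> [^] (i - 1) \<otimes> ((\<Delta> \<otimes> \<Delta>) \<otimes> \<sigma> n) \<otimes> \<Delta> [^] (n - i)"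
    using split Delta_pow_sigma_shift[of i "n - i"] assms by (simp add: m_assoc)
  also have "\<dots> = (\<Delta> [^] (i - 1) \<otimes> \<sigma> 1) \<otimes> (\<Delta> \<otimes> \<Delta>) \<otimes> \<Delta> [^] (n - i)"
    using sigma_1_Delta_square assms n_pos by (simp add: m_assoc)
  also have "\<dots> = \<sigma> i \<otimes> full_twist"
    using Delta_pow_sigma_shift[of 1 "i - 1"] assms split n_pos by (simp add: m_assoc)
  finally show ?thesis .
qed

lemma full_twist_central:
  assumes "x \<in> carrier G"
  shows "full_twist \<otimes> x = x \<otimes> full_twist"
proof -
  obtain w where w: "w \<in> braid_words (Suc n)" "x = braid_class (Suc n) w"
    using assms by (auto simp: carrier_G)
  show ?thesis
    unfolding w(2) using w(1)
  proof (induction rule: braid_class_induct)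
    case (sigma i y)
    then show ?case
      using full_twist_sigma_commute commute_mult by simp
  next
    case (sigma_inv i y)
    then show ?case
      using full_twist_sigma_commute commute_mult commute_inv by simp
  qed simp
qed

abbreviation Sigma_n :: "(nat \<times> bool) list set set" where
  "Sigma_n \<equiv> submonoid_generated G (\<delta> ` {1..n})"

lemma submonoid_Sigma_n: "submonoid Sigma_n G"
  by (rule submonoid_submonoid_generated) (auto intro: is_monoid)

lemma delta_in_Sigma_n: "k \<le> n \<Longrightarrow> \<delta> k \<in> Sigma_n"
  using generator_in_submonoid_generated[of "\<delta> k" "\<delta> ` {1..n}" G]
    submonoid.one_closed[OF submonoid_Sigma_n]
  by (cases k) (auto simp: delta_0)

lemma full_twist_in_Sigma_n: "full_twist \<in> Sigma_n"
  unfolding full_twist_def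
  by (rule submonoid_nat_pow_closed[OF submonoid_Sigma_n delta_in_Sigma_n]) simp

text \<open>Downward induction on \<open>k\<close>: if \<open>c \<delta>\<^sub>k\<^sub>+\<^sub>1 = z\<^sup>j\<close> then, writing \<open>\<delta>'\<^sub>k = \<sigma>\<^sub>2\<cdots>\<sigma>\<^sub>k\<^sub>+\<^sub>1\<close>,
  \<open>(\<Delta>\<^sup>n c \<sigma>\<^sub>1 \<Delta>) \<delta>\<^sub>k = \<Delta>\<^sup>n c \<sigma>\<^sub>1 \<delta>'\<^sub>k \<Delta> = \<Delta>\<^sup>n c \<delta>\<^sub>k\<^sub>+\<^sub>1 \<Delta> = \<Delta>\<^sup>n z\<^sup>j \<Delta> = z\<^sup>j\<^sup>+\<^sup>1\<close>.\<close>
lemma delta_right_divides_full_twist_pow: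
  assumes "k \<le> n"
  shows "\<exists>c\<in>Sigma_n. \<exists>j::nat. c \<otimes> \<delta> k = full_twist [^] j"
  using assms
proof (induction k rule: inc_induct)
  case base
  have "\<Delta> [^] n \<otimes> \<Delta> = full_twist [^] (1::nat)"
    by (simp add: full_twist_def)
  then show ?case
    using submonoid_nat_pow_closed[OF submonoid_Sigma_n] delta_in_Sigma_n by blast
next
  case (step k)
  obtain c and j :: nat where c: "c \<in> Sigma_n" "c \<otimes> \<delta> (Suc k) = full_twist [^] j"
    using step.IH by blast
  have carr: "c \<in> carrier G"
    using c submonoid.subset[OF submonoid_Sigma_n] by auto
  have "(\<Delta> [^] n \<otimes> c \<otimes> \<sigma> 1 \<otimes> \<Delta>) \<otimes> \<delta> k = \<Delta> [^] n \<otimes> c \<otimes> (\<sigma> 1 \<otimes> shifted_delta k) \<otimes> \<Delta>"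
    using Delta_delta[of k] step.hyps carr n_pos by (simp add: m_assoc)
  also have "\<dots> = \<Delta> [^] n \<otimes> full_twist [^] j \<otimes> \<Delta>"
    using sigma_1_shifted_delta[of k] step.hyps c carr by (simp add: m_assoc)
  also have "\<dots> = full_twist [^] j \<otimes> (\<Delta> [^] n \<otimes> \<Delta>)"
    using central_nat_pow[OF full_twist_closed full_twist_central, of "\<Delta> [^] n" j]
    by (metis m_assoc nat_pow_closed delta_closed order_refl full_twist_closed)
  also have "\<dots> = full_twist [^] Suc j"
    by (simp add: full_twist_def)
  finally have "(\<Delta> [^] n \<otimes> c \<otimes> \<sigma> 1 \<otimes> \<Delta>) \<otimes> \<delta> k = full_twist [^] Suc j" .
  moreover have "\<Delta> [^] n \<otimes> c \<otimes> \<sigma> 1 \<otimes> \<Delta> \<in> Sigma_n"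
    using c delta_in_Sigma_n[of 1] delta_in_Sigma_n[of n] n_pos
      submonoid_nat_pow_closed[OF submonoid_Sigma_n] submonoid.m_closed[OF submonoid_Sigma_n]
    by (simp add: delta_Suc delta_0)
  ultimately show ?case by blast
qed

lemma Sigma_n_right_divisors_of_powers:
  "Sigma_n \<subseteq> right_divisors_of_powers G Sigma_n full_twist"
  by (rule submonoid_generated_minimal)
    (use submonoid_right_divisors_of_powers[OF submonoid_Sigma_n full_twist_closed
        full_twist_central] delta_right_divides_full_twist_pow delta_in_Sigma_n
      in \<open>auto simp: right_divisors_of_powers_def\<close>)

lemma common_left_multiples_Sigma_n: "common_left_multiples G Sigma_n"
  by (rule common_left_multiples_central_powers[OF submonoid_Sigma_n full_twist_in_Sigma_n
        full_twist_central Sigma_n_right_divisors_of_powers])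

lemma braid_group_left_fractions_Sigma_n: "carrier G \<subseteq> left_fractions G Sigma_n"
proof
  fix g
  assume "g \<in> carrier G"
  then obtain w where w: "w \<in> braid_words (Suc n)" "g = braid_class (Suc n) w"
    by (auto simp: carrier_G)
  note closed = left_fractions_mult_closed[OF submonoid_Sigma_n common_left_multiples_Sigma_n]
  show "g \<in> left_fractions G Sigma_n"
    unfolding w(2) using w(1)
  proof (induction rule: braid_class_induct)
    case one
    show ?case by (rule one_in_left_fractions[OF submonoid_Sigma_n])
  next
    case (sigma i x)
    then obtain p where p: "Suc p = i" by (cases i) auto
    have "\<sigma> i = inv (\<delta> p) \<otimes> \<delta> i"
      using delta_Suc[of p] p sigma by (simp add: m_assoc[symmetric])
    then have "\<sigma> i \<in> left_fractions G Sigma_n"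
      using delta_in_Sigma_n p sigma unfolding left_fractions_def by fastforce
    then show ?case using closed sigma by blast
  next
    case (sigma_inv i x)
    then obtain p where p: "Suc p = i" by (cases i) auto
    have "inv (\<sigma> i) = inv (\<delta> i) \<otimes> \<delta> p"
      using delta_Suc[of p] p sigma_inv by (simp add: m_assoc inv_mult_group)
    then have "inv (\<sigma> i) \<in> left_fractions G Sigma_n"
      using delta_in_Sigma_n p sigma_inv unfolding left_fractions_def by fastforce
    then show ?case using closed sigma_inv by blast
  qed
qed

end

theorem proposition5p5:
  fixes n :: nat
  assumes "n \<ge> 1"
  shows "ore_monoid (Sigma_monoid n)
    \<and> group_of_fractions_via (Sigma_monoid n) (braid_group (Suc n)) id"
proof -
  interpret braids "braid_group (Suc n)" n
    by (rule braids.intro[OF group_braid_group braids_axioms.intro[OF HOL.refl assms]])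
  have "Sigma_monoid n = (braid_group (Suc n))\<lparr>carrier := Sigma_n\<rparr>"
    by (simp add: Sigma_monoid_def)
  then show ?thesis
    using ore_monoid_submonoid[OF submonoid_Sigma_n common_left_multiples_Sigma_n]
      group_of_fractions_via_submonoid[OF submonoid_Sigma_n braid_group_left_fractions_Sigma_n]
    by simp
qed

end
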